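(* There is an absolute constant $c>0$ such that for all $k\ge 2$, $\gamma\in(0,1/4]$ and $\varepsilon\in(0,1]$: if each of $n$ users reports its sample via $\varepsilon$-Hadamard Response and the curator applies any (possibly randomized) decision rule to the $n$ reports so that the whole procedure outputs ``uniform'' with probability at least $2/3$ when $p=u$ and ``not uniform'' with probability at least $2/3$ whenever $d_{TV}(p,u)>\gamma$, then $n\ge c\,k^{3/2}/(\gamma^2\varepsilon^2)$.
   Context: Users hold i.i.d. samples from an unknown $p\in\Delta([k])$; $u$ is the uniform distribution on $[k]$; $d_{TV}(p,q)=\frac12\|p-q\|_1$. Hadamard Response (HR): let $K=2^{\lceil\log_2(k+1)\rceil}$ and let $H_K\in\{-1,1\}^{K\times K}$ be the Sylvester Hadamard matrix ($H_1=[1]$, $H_{2m}=\begin{bmatrix}H_m&H_m\\H_m&-H_m\end{bmatrix}$). Fix an injection $\phi:[k]\to\{2,\dots,K\}$ and set $C_x=\{z\in[K]:(H_K)_{\phi(x),z}=1\}$. On input $x\in[k]$, HR outputs $z\in[K]$ with probability $\frac{2}{K}\cdot\frac{e^\varepsilon}{e^\varepsilon+1}$ if $z\in C_x$ and $\frac{2}{K}\cdot\frac{1}{e^\varepsilon+1}$ otherwise, independently across users. *)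

theory Defs
  imports Complex_Main "HOL-Library.FuncSet"
begin

text \<open>Sylvester Hadamard matrix of size 2^m, with 1-based indices i, j in {1..2^m}:
  H_1 = [1], H_{2h} = [[H_h, H_h],[H_h, -H_h]].\<close>
fun sylvester :: "nat \<Rightarrow> nat \<Rightarrow> nat \<Rightarrow> int" where
  "sylvester 0 i j = 1"
| "sylvester (Suc m) i j =
     (if i \<le> 2^m then
        (if j \<le> 2^m then sylvester m i j else sylvester m i (j - 2^m))
      else
        (if j \<le> 2^m then sylvester m (i - 2^m) j else - sylvester m (i - 2^m) (j - 2^m)))"

definition hr_logK :: "nat \<Rightarrow> nat" where
  "hr_logK k = nat \<lceil>log 2 (real k + 1)\<rceil>"

definition hr_K :: "nat \<Rightarrow> nat" where
  "hr_K k = 2 ^ hr_logK k"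

definition hr_C :: "nat \<Rightarrow> (nat \<Rightarrow> nat) \<Rightarrow> nat \<Rightarrow> nat set" where
  "hr_C k \<phi> x = {z \<in> {1..hr_K k}. sylvester (hr_logK k) (\<phi> x) z = 1}"

text \<open>Probability that Hadamard Response outputs z on input x.\<close>
definition hr_Q :: "nat \<Rightarrow> real \<Rightarrow> (nat \<Rightarrow> nat) \<Rightarrow> nat \<Rightarrow> nat \<Rightarrow> real" where
  "hr_Q k \<epsilon> \<phi> x z =
     (2 / real (hr_K k)) *
     (if z \<in> hr_C k \<phi> x then exp \<epsilon> / (exp \<epsilon> + 1) else 1 / (exp \<epsilon> + 1))"

definition hr_out :: "nat \<Rightarrow> real \<Rightarrow> (nat \<Rightarrow> nat) \<Rightarrow> (nat \<Rightarrow> real) \<Rightarrow> nat \<Rightarrow> real" where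
  "hr_out k \<epsilon> \<phi> p z = (\<Sum>x\<in>{1..k}. p x * hr_Q k \<epsilon> \<phi> x z)"

text \<open>p is a probability distribution on [k] = {1..k} (values outside [k] are irrelevant).\<close>
definition is_dist :: "nat \<Rightarrow> (nat \<Rightarrow> real) \<Rightarrow> bool" where
  "is_dist k p \<longleftrightarrow> (\<forall>x\<in>{1..k}. 0 \<le> p x) \<and> (\<Sum>x\<in>{1..k}. p x) = 1"

definition unif :: "nat \<Rightarrow> nat \<Rightarrow> real" where
  "unif k = (\<lambda>_. 1 / real k)"

definition dtv :: "nat \<Rightarrow> (nat \<Rightarrow> real) \<Rightarrow> (nat \<Rightarrow> real) \<Rightarrow> real" where
  "dtv k p q = (1/2) * (\<Sum>x\<in>{1..k}. \<bar>p x - q x\<bar>)"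

text \<open>A randomized decision rule is given by delta(zs) in [0,1], the probability of
  answering "not uniform" on the reports zs (zs i = report of user i, i < n).
  The reports are i.i.d. with distribution hr_out p; this is the probability
  that the whole procedure answers "not uniform".\<close>
definition reject_prob ::
  "nat \<Rightarrow> real \<Rightarrow> (nat \<Rightarrow> nat) \<Rightarrow> nat \<Rightarrow> ((nat \<Rightarrow> nat) \<Rightarrow> real) \<Rightarrow> (nat \<Rightarrow> real) \<Rightarrow> real" where
  "reject_prob k \<epsilon> \<phi> n \<delta> p =
     (\<Sum>zs\<in>PiE {..<n} (\<lambda>_. {1..hr_K k}). (\<Prod>i<n. hr_out k \<epsilon> \<phi> p (zs i)) * \<delta> zs)"

end

theory Submission
  imports Defs "HOL-Probability.Hoeffding"
begin

text \<open>Ingster's chi-square method against Paninski's family. Pair up the symbols and perturb the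
  uniform distribution to p_theta(2i+1) = (1 + eta theta_i)/k, p_theta(2i+2) = (1 - eta theta_i)/k with
  theta in {-1,1}^(k/2) and eta = 4 gamma; each p_theta is gamma-far from uniform. Under Hadamard
  Response the report distribution of p_theta is q_0 + g D_theta with g = tanh(epsilon/2) eta/(kK),
  where D_theta = sum_i theta_i v_i and the row differences v_i = H_phi(2i+1) - H_phi(2i+2) are
  orthogonal. A test that succeeds with probability 2/3 forces the chi-square divergence between the
  n-fold uniform report distribution and the uniform mixture of the n-fold perturbed ones to be at
  least 1/9, i.e. E_(theta,theta') (1 + g^2 <D_theta, D_theta'>_(1/q_0))^n >= 10/9. Bounding
  (1 + X)^n <= exp (n X), averaging over the Rademacher vector theta' and applying Bessel's inequality
  to the orthogonal family v_i bounds the left side by exp (O (n^2 gamma^4 epsilon^4 / k^3)), which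
  gives n = Omega (k^(3/2) / (gamma^2 epsilon^2)).\<close>

lemma sylvester_cases: "sylvester m i j = 1 \<or> sylvester m i j = -1"
  by (induction m arbitrary: i j) auto

lemma sylvester_first_row: "sylvester m 1 j = 1"
  by (induction m arbitrary: j) auto

lemma sum_atLeastAtMost_two_power_Suc:
  fixes f :: "nat \<Rightarrow> 'a::comm_monoid_add"
  shows "(\<Sum>z\<in>{1..2^Suc m}. f z) = (\<Sum>z\<in>{1..2^m}. f z) + (\<Sum>z\<in>{1..2^m}. f (z + 2^m))"
proof -
  have "{1..2^Suc m} = {1..(2::nat)^m} \<union> {2^m+1..2^m+2^m}"
    by auto
  moreover have "(\<Sum>z\<in>{2^m+1..2^m+2^m}. f z) = (\<Sum>z\<in>{1..2^m}. f (z + 2^m))"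
    using sum.shift_bounds_cl_nat_ivl[of f 1 "2^m" "2^m"] by (simp add: add.commute)
  ultimately show ?thesis
    by (simp add: sum.union_disjoint)
qed

lemma sylvester_orthogonal:
  assumes "a \<in> {1..2^m}" "b \<in> {1..2^m}"
  shows "(\<Sum>z\<in>{1..2^m}. real_of_int (sylvester m a z) * real_of_int (sylvester m b z))
         = (if a = b then 2^m else 0)"
  using assms
proof (induction m arbitrary: a b)
  case 0
  then show ?case by auto
next
  case (Suc m)
  let ?N = "(2::nat)^m"
  define S where "S a b = (\<Sum>z\<in>{1..?N}. real_of_int (sylvester m a z) * real_of_int (sylvester m b z))"
    for a b
  have IH: "S a b = (if a = b then 2^m else 0)" if "a \<in> {1..?N}" "b \<in> {1..?N}" for a b
    unfolding S_def using that by (rule Suc.IH)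
  have left: "(\<Sum>z\<in>{1..?N}. real_of_int (sylvester (Suc m) a z) * real_of_int (sylvester (Suc m) b z))
      = (if a \<le> ?N then (if b \<le> ?N then S a b else S a (b - ?N))
         else (if b \<le> ?N then S (a - ?N) b else S (a - ?N) (b - ?N)))" for a b
    unfolding S_def by (auto intro!: sum.cong)
  have right: "(\<Sum>z\<in>{1..?N}. real_of_int (sylvester (Suc m) a (z + ?N))
                              * real_of_int (sylvester (Suc m) b (z + ?N)))
      = (if a \<le> ?N then (if b \<le> ?N then S a b else - S a (b - ?N))
         else (if b \<le> ?N then - S (a - ?N) b else S (a - ?N) (b - ?N)))" for a b
    unfolding S_def by (auto simp: sum_negf intro!: sum.cong)
  show ?case
    using Suc.prems
    by (subst sum_atLeastAtMost_two_power_Suc, simp only: left right) (auto simp: IH, (subst IH; auto)+)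
qed

lemma sylvester_row_sum:
  assumes "a \<in> {2..2^m}"
  shows "(\<Sum>z\<in>{1..2^m}. real_of_int (sylvester m a z)) = 0"
proof -
  have "(\<Sum>z\<in>{1..2^m}. real_of_int (sylvester m a z))
      = (\<Sum>z\<in>{1..2^m}. real_of_int (sylvester m 1 z) * real_of_int (sylvester m a z))"
    by (simp only: sylvester_first_row of_int_1 mult_1)
  also have "\<dots> = 0"
    using sylvester_orthogonal[of 1 m a] assms by simp
  finally show ?thesis .
qed

lemma cosh_le_exp_half_square: "cosh x \<le> exp (x^2 / 2)" for x :: real
proof -
  have "cosh y \<le> exp (y^2 / 2)" if "0 \<le> y" for y :: real
  proof -
    \<comment> \<open>Hoeffding's lemma for the fair coin on \<open>{-y, y}\<close>: \<open>ln (cosh y) \<le> y\<^sup>2 / 2\<close>.\<close>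
    have "- (2*y) * (1/2) + ln (1 + (1/2) * (exp (2*y) - 1)) \<le> (2*y)^2 / 8"
      using Hoeffdings_lemma_aux[of "2*y" "1/2"] that by simp
    then have "ln ((1 + exp (2*y)) / 2) \<le> y + y^2/2"
      by (simp add: field_simps power2_eq_square)
    then have "(1 + exp (2*y)) / 2 \<le> exp (y + y^2/2)"
      by (metis add_pos_pos divide_pos_pos exp_gt_zero exp_le_cancel_iff exp_ln zero_less_one
          zero_less_numeral)
    then have "(1 + exp (2*y)) / 2 \<le> exp y * exp (y^2/2)"
      by (simp add: exp_add)
    then have "exp (-y) * ((1 + exp (2*y)) / 2) \<le> exp (y^2/2)"
      by (simp add: exp_minus divide_simps mult.commute)
    moreover have "exp (-y) * ((1 + exp (2*y)) / 2) = cosh y"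
      by (simp add: cosh_def exp_minus field_simps exp_add[symmetric])
    ultimately show ?thesis
      by simp
  qed
  from this[of "\<bar>x\<bar>"] show ?thesis
    by simp
qed

lemma sum_exp_Rademacher_le:
  fixes a :: "'i \<Rightarrow> real"
  assumes "finite I"
  shows "(\<Sum>\<theta>\<in>PiE I (\<lambda>_. {-1,1}). exp (\<Sum>j\<in>I. \<theta> j * a j))
         \<le> 2 ^ card I * exp ((\<Sum>j\<in>I. (a j)^2) / 2)"
proof -
  have "(\<Sum>\<theta>\<in>PiE I (\<lambda>_. {-1,1}). exp (\<Sum>j\<in>I. \<theta> j * a j))
      = (\<Sum>\<theta>\<in>PiE I (\<lambda>_. {-1,1}). \<Prod>j\<in>I. exp (\<theta> j * a j))"
    using assms by (simp add: exp_sum)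
  also have "\<dots> = (\<Prod>j\<in>I. \<Sum>t\<in>{-1,1}. exp (t * a j))"
    using assms by (rule prod_sum_PiE[symmetric]) auto
  also have "\<dots> = (\<Prod>j\<in>I. 2 * cosh (a j))"
    by (simp add: cosh_def exp_minus algebra_simps)
  also have "\<dots> \<le> (\<Prod>j\<in>I. 2 * exp ((a j)^2 / 2))"
    by (intro prod_mono conjI mult_left_mono cosh_le_exp_half_square) auto
  also have "\<dots> = 2 ^ card I * exp ((\<Sum>j\<in>I. (a j)^2) / 2)"
    using assms by (simp add: prod.distrib exp_sum sum_divide_distrib)
  finally show ?thesis .
qed

lemma sum_square_orthogonal_expansion:
  fixes v :: "'i \<Rightarrow> 'z \<Rightarrow> real" and c :: "'i \<Rightarrow> real"
  assumes orth: "\<And>i j. i \<in> I \<Longrightarrow> j \<in> I \<Longrightarrow> (\<Sum>z\<in>Z. v i z * v j z) = (if i = j then N else 0)"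
    and "finite I"
  shows "(\<Sum>z\<in>Z. (\<Sum>j\<in>I. c j * v j z)^2) = N * (\<Sum>j\<in>I. (c j)^2)"
proof -
  have "(\<Sum>z\<in>Z. (\<Sum>j\<in>I. c j * v j z)^2) = (\<Sum>i\<in>I. \<Sum>j\<in>I. c i * c j * (\<Sum>z\<in>Z. v i z * v j z))"
    unfolding power2_eq_square sum_product
    by (simp add: sum_distrib_left sum.swap[of _ Z] algebra_simps)
  also have "\<dots> = (\<Sum>i\<in>I. \<Sum>j\<in>I. if i = j then c i * c j * N else 0)"
    by (intro sum.cong refl) (simp add: orth)
  also have "\<dots> = N * (\<Sum>j\<in>I. (c j)^2)"
    using assms by (simp add: sum_distrib_left power2_eq_square mult.commute)
  finally show ?thesis .
qed

lemma Bessel_inequality: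
  fixes v :: "'i \<Rightarrow> 'z \<Rightarrow> real" and u :: "'z \<Rightarrow> real"
  assumes orth: "\<And>i j. i \<in> I \<Longrightarrow> j \<in> I \<Longrightarrow> (\<Sum>z\<in>Z. v i z * v j z) = (if i = j then N else 0)"
    and "finite I" and "N > 0"
  shows "(\<Sum>j\<in>I. (\<Sum>z\<in>Z. u z * v j z)^2) \<le> N * (\<Sum>z\<in>Z. (u z)^2)"
proof -
  define c where "c j = (\<Sum>z\<in>Z. u z * v j z)" for j
  define w where "w z = (\<Sum>j\<in>I. c j * v j z)" for z
  have norm_w: "(\<Sum>z\<in>Z. (w z)^2) = N * (\<Sum>j\<in>I. (c j)^2)"
    unfolding w_def using orth \<open>finite I\<close> by (rule sum_square_orthogonal_expansion)
  have inner_uw: "(\<Sum>z\<in>Z. u z * w z) = (\<Sum>j\<in>I. (c j)^2)"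
    unfolding w_def c_def
    by (simp add: sum_distrib_left sum.swap[of _ Z] power2_eq_square mult.left_commute)
  have "0 \<le> (\<Sum>z\<in>Z. (u z - w z / N)^2)"
    by (simp add: sum_nonneg)
  also have "\<dots> = (\<Sum>z\<in>Z. (u z)^2) - 2 / N * (\<Sum>z\<in>Z. u z * w z) + (\<Sum>z\<in>Z. (w z)^2) / N^2"
    by (simp add: power2_diff power_divide sum.distrib sum_subtractf sum_distrib_left
        sum_divide_distrib algebra_simps)
  also have "\<dots> = (\<Sum>z\<in>Z. (u z)^2) - (\<Sum>j\<in>I. (c j)^2) / N"
    using \<open>N > 0\<close> unfolding norm_w inner_uw by (simp add: power2_eq_square field_simps)
  finally show ?thesis
    using \<open>N > 0\<close> by (simp add: c_def field_simps)
qed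

lemma sum_PiE_prod_eq_power:
  fixes f :: "'z \<Rightarrow> 'a::comm_semiring_1"
  assumes "finite Z"
  shows "(\<Sum>zs\<in>PiE {..<n} (\<lambda>_. Z). \<Prod>i<n. f (zs i)) = (\<Sum>z\<in>Z. f z) ^ n"
  using prod_sum_PiE[of "{..<n}" "\<lambda>_. Z" "\<lambda>_. f"] assms by simp

lemma chi_square_ge_of_test:
  fixes P0 P \<delta> :: "'a \<Rightarrow> real"
  assumes "finite A" and P0_pos: "\<And>x. x \<in> A \<Longrightarrow> P0 x > 0"
    and "sum P0 A = 1" and "sum P A = 1"
    and \<delta>: "\<And>x. x \<in> A \<Longrightarrow> 0 \<le> \<delta> x \<and> \<delta> x \<le> 1"
    and "(\<Sum>x\<in>A. P0 x * \<delta> x) \<le> 1/3" and "(\<Sum>x\<in>A. P x * \<delta> x) \<ge> 2/3"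
  shows "(\<Sum>x\<in>A. (P x)^2 / P0 x) \<ge> 10/9"
proof -
  have AM_GM: "(P x - P0 x) * \<delta> x \<le> 3/2 * (P x - P0 x)^2 / P0 x + P0 x / 6" if "x \<in> A" for x
  proof -
    have "(P x - P0 x) * \<delta> x \<le> \<bar>P x - P0 x\<bar>"
      using \<delta>[OF that] by (cases "P x \<ge> P0 x") (auto intro: mult_left_le order_trans[of _ 0]
          simp: mult_nonpos_nonneg)
    also have "\<dots> \<le> 3/2 * (P x - P0 x)^2 / P0 x + P0 x / 6"
    proof -
      have "6 * P0 x * \<bar>P x - P0 x\<bar> \<le> 9 * (P x - P0 x)^2 + (P0 x)^2"
        using sum_squares_ge_zero[of "3 * \<bar>P x - P0 x\<bar> - P0 x" 0]
        by (simp add: power2_eq_square algebra_simps abs_mult_self_eq)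
      then show ?thesis
        using P0_pos[OF that] by (simp add: field_simps power2_eq_square)
    qed
    finally show ?thesis .
  qed
  have "1/3 \<le> (\<Sum>x\<in>A. (P x - P0 x) * \<delta> x)"
    using assms by (simp add: left_diff_distrib sum_subtractf)
  also have "\<dots> \<le> (\<Sum>x\<in>A. 3/2 * (P x - P0 x)^2 / P0 x + P0 x / 6)"
    by (rule sum_mono) (rule AM_GM)
  also have "\<dots> = 3/2 * (\<Sum>x\<in>A. (P x - P0 x)^2 / P0 x) + 1/6"
    using assms by (simp add: sum.distrib sum_divide_distrib[symmetric] sum_distrib_left)
  also have "(\<Sum>x\<in>A. (P x - P0 x)^2 / P0 x) = (\<Sum>x\<in>A. (P x)^2 / P0 x - 2 * P x + P0 x)"
    using P0_pos by (intro sum.cong refl) (force simp: power2_eq_square field_simps)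
  also have "\<dots> = (\<Sum>x\<in>A. (P x)^2 / P0 x) - 1"
    using assms by (simp add: sum.distrib sum_subtractf sum_distrib_left[symmetric])
  finally show ?thesis by (simp add: field_simps)
qed

lemma sum_mixture_square_div_product:
  fixes q :: "'t \<Rightarrow> 'z \<Rightarrow> real" and q0 :: "'z \<Rightarrow> real"
  assumes "finite Z" and "finite T"
  shows "(\<Sum>zs\<in>PiE {..<n} (\<lambda>_. Z). (\<Sum>\<theta>\<in>T. \<Prod>i<n. q \<theta> (zs i))^2 / (\<Prod>i<n. q0 (zs i)))
         = (\<Sum>\<theta>\<in>T. \<Sum>\<theta>'\<in>T. (\<Sum>z\<in>Z. q \<theta> z * q \<theta>' z / q0 z) ^ n)"
proof -
  have "(\<Sum>zs\<in>PiE {..<n} (\<lambda>_. Z). (\<Sum>\<theta>\<in>T. \<Prod>i<n. q \<theta> (zs i))^2 / (\<Prod>i<n. q0 (zs i)))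
      = (\<Sum>\<theta>\<in>T. \<Sum>\<theta>'\<in>T. \<Sum>zs\<in>PiE {..<n} (\<lambda>_. Z). \<Prod>i<n. q \<theta> (zs i) * q \<theta>' (zs i) / q0 (zs i))"
    by (simp add: power2_eq_square sum_product sum_divide_distrib sum.swap[of _ "PiE _ _"]
        prod.distrib prod_dividef)
  also have "\<dots> = (\<Sum>\<theta>\<in>T. \<Sum>\<theta>'\<in>T. (\<Sum>z\<in>Z. q \<theta> z * q \<theta>' z / q0 z) ^ n)"
    using sum_PiE_prod_eq_power[OF \<open>finite Z\<close>, of "\<lambda>z. q _ z * q _ z / q0 z"] by simp
  finally show ?thesis .
qed

lemma sum_mixture_PiE_prod:
  fixes q :: "'t \<Rightarrow> 'z \<Rightarrow> real" and n :: nat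
  assumes "finite Z" and "finite T" and "T \<noteq> {}" and "\<And>\<theta>. \<theta> \<in> T \<Longrightarrow> (\<Sum>z\<in>Z. q \<theta> z) = 1"
  shows "(\<Sum>zs\<in>PiE {..<n} (\<lambda>_. Z). (\<Sum>\<theta>\<in>T. \<Prod>i<n. q \<theta> (zs i)) / card T) = 1"
proof -
  have "(\<Sum>zs\<in>PiE {..<n} (\<lambda>_. Z). (\<Sum>\<theta>\<in>T. \<Prod>i<n. q \<theta> (zs i)) / card T)
      = (\<Sum>\<theta>\<in>T. \<Sum>zs\<in>PiE {..<n} (\<lambda>_. Z). \<Prod>i<n. q \<theta> (zs i)) / card T"
    by (simp add: sum_divide_distrib[symmetric] sum.swap[of _ "PiE _ _"])
  also have "\<dots> = 1"
    using assms sum_PiE_prod_eq_power[OF \<open>finite Z\<close>, of "q _" n] by (simp add: card_gt_0_iff)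
  finally show ?thesis .
qed

lemma mixture_test_lower_bound:
  fixes q :: "'t \<Rightarrow> 'z \<Rightarrow> real" and q0 :: "'z \<Rightarrow> real" and \<delta> :: "(nat \<Rightarrow> 'z) \<Rightarrow> real"
  assumes "finite Z" and "finite T" and "T \<noteq> {}"
    and q0_pos: "\<And>z. z \<in> Z \<Longrightarrow> q0 z > 0" and "(\<Sum>z\<in>Z. q0 z) = 1"
    and q_sum: "\<And>\<theta>. \<theta> \<in> T \<Longrightarrow> (\<Sum>z\<in>Z. q \<theta> z) = 1"
    and \<delta>: "\<And>zs. 0 \<le> \<delta> zs \<and> \<delta> zs \<le> 1"
    and accept: "(\<Sum>zs\<in>PiE {..<n} (\<lambda>_. Z). (\<Prod>i<n. q0 (zs i)) * \<delta> zs) \<le> 1/3"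
    and reject: "\<And>\<theta>. \<theta> \<in> T \<Longrightarrow> (\<Sum>zs\<in>PiE {..<n} (\<lambda>_. Z). (\<Prod>i<n. q \<theta> (zs i)) * \<delta> zs) \<ge> 2/3"
  shows "(\<Sum>\<theta>\<in>T. \<Sum>\<theta>'\<in>T. (\<Sum>z\<in>Z. q \<theta> z * q \<theta>' z / q0 z) ^ n) \<ge> 10/9 * card T ^ 2"
proof -
  define Zn where "Zn = PiE {..<n} (\<lambda>_::nat. Z)"
  define N where "N = real (card T)"
  define M where "M zs = (\<Sum>\<theta>\<in>T. \<Prod>i<n. q \<theta> (zs i)) / N" for zs
  have "N > 0" and "finite Zn"
    using assms by (simp_all add: N_def Zn_def card_gt_0_iff finite_PiE)
  have sum_M: "sum M Zn = 1"
    unfolding M_def Zn_def N_def using assms(1-3) q_sum by (rule sum_mixture_PiE_prod)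
  have reject_M: "(\<Sum>zs\<in>Zn. M zs * \<delta> zs) \<ge> 2/3"
  proof -
    have "(\<Sum>zs\<in>Zn. M zs * \<delta> zs) = (\<Sum>\<theta>\<in>T. \<Sum>zs\<in>Zn. (\<Prod>i<n. q \<theta> (zs i)) * \<delta> zs) / N"
      unfolding M_def by (simp add: sum_divide_distrib[symmetric] sum_distrib_right sum.swap[of _ Zn])
    also have "\<dots> \<ge> (\<Sum>\<theta>\<in>T. 2/3) / N"
      using reject \<open>N > 0\<close> by (intro divide_right_mono sum_mono) (auto simp: Zn_def)
    finally show ?thesis
      using \<open>N > 0\<close> by (simp add: N_def)
  qed
  have "(\<Sum>zs\<in>Zn. (M zs)^2 / (\<Prod>i<n. q0 (zs i))) \<ge> 10/9"
  proof (rule chi_square_ge_of_test[OF \<open>finite Zn\<close> _ _ sum_M _ _ reject_M])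
    show "(\<Prod>i<n. q0 (zs i)) > 0" if "zs \<in> Zn" for zs
      using that q0_pos by (intro prod_pos) (auto simp: Zn_def PiE_iff)
    show "(\<Sum>zs\<in>Zn. \<Prod>i<n. q0 (zs i)) = 1"
      using assms by (simp add: Zn_def sum_PiE_prod_eq_power)
  qed (use \<delta> accept in \<open>auto simp: Zn_def\<close>)
  moreover have "(\<Sum>zs\<in>Zn. (M zs)^2 / (\<Prod>i<n. q0 (zs i)))
      = (\<Sum>\<theta>\<in>T. \<Sum>\<theta>'\<in>T. (\<Sum>z\<in>Z. q \<theta> z * q \<theta>' z / q0 z) ^ n) / N^2"
  proof -
    have "(M zs)^2 / (\<Prod>i<n. q0 (zs i)) = (\<Sum>\<theta>\<in>T. \<Prod>i<n. q \<theta> (zs i))^2 / (\<Prod>i<n. q0 (zs i)) / N^2"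
      for zs
      by (simp add: M_def power_divide)
    then show ?thesis
      using sum_mixture_square_div_product[OF \<open>finite Z\<close> \<open>finite T\<close>, of q n q0]
      by (simp only: Zn_def sum_divide_distrib[symmetric])
  qed
  ultimately show ?thesis
    using \<open>N > 0\<close> by (simp add: N_def field_simps)
qed

abbreviation sign_vectors :: "nat \<Rightarrow> (nat \<Rightarrow> real) set" where
  "sign_vectors m \<equiv> PiE {..<m} (\<lambda>_. {-1, 1})"

text \<open>Symbols beyond 2m, in particular k when k is odd, are left unperturbed.\<close>
definition pair_sign :: "nat \<Rightarrow> (nat \<Rightarrow> real) \<Rightarrow> nat \<Rightarrow> real" where
  "pair_sign m \<theta> x = (\<Sum>i<m. \<theta> i * (of_bool (x = 2*i+1) - of_bool (x = 2*i+2)))"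

lemma sum_pair_sign_mult:
  assumes "2 * m \<le> k"
  shows "(\<Sum>x\<in>{1..k}. pair_sign m \<theta> x * f x) = (\<Sum>i<m. \<theta> i * (f (2*i+1) - f (2*i+2)))"
proof -
  have "(\<Sum>x\<in>{1..k}. pair_sign m \<theta> x * f x)
      = (\<Sum>i<m. \<theta> i * ((\<Sum>x\<in>{1..k}. of_bool (x = 2*i+1) * f x)
                         - (\<Sum>x\<in>{1..k}. of_bool (x = 2*i+2) * f x)))"
    unfolding pair_sign_def sum_distrib_right
    by (subst sum.swap) (simp only: sum_distrib_left sum_subtractf[symmetric] left_diff_distrib mult.assoc)
  also have "\<dots> = (\<Sum>i<m. \<theta> i * (f (2*i+1) - f (2*i+2)))"
  proof (intro sum.cong refl)
    fix i assume "i \<in> {..<m}"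
    then have "{1..k} \<inter> {x. x = 2*i+1} = {2*i+1}" "{1..k} \<inter> {x. x = 2*i+2} = {2*i+2}"
      using assms by auto
    then show "\<theta> i * ((\<Sum>x\<in>{1..k}. of_bool (x = 2*i+1) * f x) - (\<Sum>x\<in>{1..k}. of_bool (x = 2*i+2) * f x))
        = \<theta> i * (f (2*i+1) - f (2*i+2))"
      by simp
  qed
  finally show ?thesis .
qed

lemma pair_sign_odd: "pair_sign m \<theta> (2*j+1) = (if j < m then \<theta> j else 0)"
proof -
  have "pair_sign m \<theta> (2*j+1) = (\<Sum>i<m. if i = j then \<theta> i else 0)"
    unfolding pair_sign_def by (intro sum.cong refl) auto
  then show ?thesis by (simp add: sum.delta')
qed

lemma pair_sign_even: "pair_sign m \<theta> (2*j+2) = (if j < m then - \<theta> j else 0)"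
proof -
  have "pair_sign m \<theta> (2*j+2) = (\<Sum>i<m. if i = j then - \<theta> i else 0)"
    unfolding pair_sign_def by (intro sum.cong refl) auto
  then show ?thesis by (simp add: sum.delta')
qed

lemma abs_pair_sign_le:
  assumes "\<And>i. i < m \<Longrightarrow> \<bar>\<theta> i\<bar> \<le> 1"
  shows "\<bar>pair_sign m \<theta> x\<bar> \<le> 1"
proof -
  consider "x = 0" | j where "x = 2*j+1" | j where "x = 2*j+2"
  proof (cases "even x")
    case True
    then show ?thesis
      using that(1) that(3)[of "x div 2 - 1"] by (cases "x = 0") auto
  qed (auto elim: oddE)
  then show ?thesis
  proof cases
    case 1
    then show ?thesis by (simp add: pair_sign_def)
  next
    case (2 j)
    then show ?thesis using assms by (simp only: pair_sign_odd) auto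
  next
    case (3 j)
    then show ?thesis using assms by (simp only: pair_sign_even) auto
  qed
qed

definition paninski :: "nat \<Rightarrow> real \<Rightarrow> (nat \<Rightarrow> real) \<Rightarrow> nat \<Rightarrow> real" where
  "paninski k \<eta> \<theta> x = (1 + \<eta> * pair_sign (k div 2) \<theta> x) / k"

lemma sum_pair_sign: "(\<Sum>x\<in>{1..k}. pair_sign (k div 2) \<theta> x) = 0"
  using sum_pair_sign_mult[of "k div 2" k \<theta> "\<lambda>_. 1"] by simp

lemma is_dist_paninski:
  assumes "k > 0" and "0 \<le> \<eta>" "\<eta> \<le> 1" and "\<And>i. i < k div 2 \<Longrightarrow> \<bar>\<theta> i\<bar> \<le> 1"
  shows "is_dist k (paninski k \<eta> \<theta>)"
proof -
  have "0 \<le> 1 + \<eta> * pair_sign (k div 2) \<theta> x" for x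
  proof -
    have "\<bar>\<eta> * pair_sign (k div 2) \<theta> x\<bar> \<le> 1"
      using abs_pair_sign_le[OF assms(4)] assms(2,3) by (simp add: abs_mult mult_le_one)
    then show ?thesis by linarith
  qed
  then show ?thesis
    using assms(1) sum_pair_sign[of k \<theta>]
    by (simp add: is_dist_def paninski_def sum_divide_distrib[symmetric] sum.distrib
        sum_distrib_left[symmetric])
qed

lemma sum_abs_pair_sign_ge:
  assumes \<theta>: "\<theta> \<in> sign_vectors m" and "2 * m \<le> k"
  shows "2 * real m \<le> (\<Sum>x\<in>{1..k}. \<bar>pair_sign m \<theta> x\<bar>)"
proof -
  let ?s = "pair_sign m \<theta>"
  have "(\<Sum>x\<in>{1..k}. ?s x * ?s x) = (\<Sum>i<m. \<theta> i * (?s (2*i+1) - ?s (2*i+2)))"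
    using assms(2) by (rule sum_pair_sign_mult)
  also have "\<dots> = (\<Sum>i<m. 2)"
  proof (intro sum.cong refl)
    fix i assume "i \<in> {..<m}"
    then have "\<theta> i = 1 \<or> \<theta> i = -1"
      using \<theta> by (force simp: PiE_iff)
    then show "\<theta> i * (?s (2*i+1) - ?s (2*i+2)) = 2"
      using \<open>i \<in> {..<m}\<close> by (simp only: pair_sign_odd pair_sign_even) auto
  qed
  finally have sum_square: "(\<Sum>x\<in>{1..k}. ?s x * ?s x) = 2 * real m"
    by simp
  have "(\<Sum>x\<in>{1..k}. ?s x * ?s x) \<le> (\<Sum>x\<in>{1..k}. \<bar>?s x\<bar>)"
  proof (intro sum_mono)
    fix x
    have "\<bar>?s x\<bar> \<le> 1"
      using \<theta> by (intro abs_pair_sign_le) (force simp: PiE_iff)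
    then have "\<bar>?s x\<bar> * \<bar>?s x\<bar> \<le> \<bar>?s x\<bar>"
      by (intro mult_left_le) auto
    then show "?s x * ?s x \<le> \<bar>?s x\<bar>"
      by simp
  qed
  then show ?thesis
    unfolding sum_square .
qed

lemma dtv_paninski_ge:
  assumes "k > 0" and "0 \<le> \<eta>" and "\<theta> \<in> sign_vectors (k div 2)"
  shows "\<eta> * real (k div 2) / k \<le> dtv k (paninski k \<eta> \<theta>) (unif k)"
proof -
  let ?s = "pair_sign (k div 2) \<theta>"
  have "1/2 * (\<eta> / k * (2 * real (k div 2))) \<le> 1/2 * (\<eta> / k * (\<Sum>x\<in>{1..k}. \<bar>?s x\<bar>))"
    using assms by (intro mult_left_mono sum_abs_pair_sign_ge) auto
  also have "\<dots> = dtv k (paninski k \<eta> \<theta>) (unif k)"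
  proof -
    have "\<bar>paninski k \<eta> \<theta> x - unif k x\<bar> = \<eta> / k * \<bar>?s x\<bar>" for x
      using assms(2) by (simp add: paninski_def unif_def add_divide_distrib abs_mult)
    then show ?thesis
      by (simp add: dtv_def sum_distrib_left)
  qed
  finally show ?thesis
    by simp
qed

lemma dtv_paninski_gt:
  assumes "2 \<le> k" and "0 < \<gamma>" and "\<theta> \<in> sign_vectors (k div 2)"
  shows "\<gamma> < dtv k (paninski k (4 * \<gamma>) \<theta>) (unif k)"
proof -
  have "k < 4 * (k div 2)"
    using assms(1) by presburger
  then have "real k < 4 * real (k div 2)"
    by (metis of_nat_less_iff of_nat_mult of_nat_numeral)
  then have "\<gamma> < 4 * \<gamma> * real (k div 2) / k"
    using assms(1,2) by (simp add: field_simps)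
  also have "\<dots> \<le> dtv k (paninski k (4 * \<gamma>) \<theta>) (unif k)"
    using assms by (intro dtv_paninski_ge) auto
  finally show ?thesis .
qed

lemma powr_three_halves_le:
  fixes x b :: real
  assumes "0 \<le> x" "0 \<le> b" and "x ^ 3 \<le> b ^ 2"
  shows "x powr (3/2) \<le> b"
proof (rule power2_le_imp_le)
  have "(x powr (3/2))^2 = x powr (3/2 + 3/2)"
    by (simp add: power2_eq_square powr_add[symmetric])
  also have "\<dots> = x ^ 3"
    using assms(1) by (cases "x = 0") (simp_all add: powr_realpow)
  finally show "(x powr (3/2))^2 \<le> b^2"
    using assms(3) by simp
qed (use assms(2) in simp)

lemma hr_Q_ge:
  assumes "0 \<le> \<epsilon>"
  shows "2 / (hr_K k * (exp \<epsilon> + 1)) \<le> hr_Q k \<epsilon> \<phi> x z"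
  using assms by (simp add: hr_Q_def divide_right_mono field_simps add_pos_pos)

lemma hr_out_ge:
  assumes "0 \<le> \<epsilon>" and "is_dist k p"
  shows "2 / (hr_K k * (exp \<epsilon> + 1)) \<le> hr_out k \<epsilon> \<phi> p z"
proof -
  have "2 / (hr_K k * (exp \<epsilon> + 1)) = (\<Sum>x\<in>{1..k}. p x * (2 / (hr_K k * (exp \<epsilon> + 1))))"
    unfolding sum_distrib_right[symmetric] using assms(2) by (simp add: is_dist_def)
  also have "\<dots> \<le> hr_out k \<epsilon> \<phi> p z"
    unfolding hr_out_def using assms
    by (intro sum_mono mult_left_mono hr_Q_ge) (auto simp: is_dist_def)
  finally show ?thesis .
qed

lemma hr_Q_eq_sylvester:
  assumes "z \<in> {1..hr_K k}"
  shows "hr_Q k \<epsilon> \<phi> x z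
    = (1 + (exp \<epsilon> - 1) / (exp \<epsilon> + 1) * real_of_int (sylvester (hr_logK k) (\<phi> x) z)) / hr_K k"
proof -
  let ?t = "(exp \<epsilon> - 1) / (exp \<epsilon> + 1)"
  have "exp \<epsilon> + 1 > 0"
    by (simp add: add_pos_pos)
  then have in_C: "2 * (exp \<epsilon> / (exp \<epsilon> + 1)) = 1 + ?t * 1"
    and not_in_C: "2 * (1 / (exp \<epsilon> + 1)) = 1 + ?t * (-1)"
    by (simp_all add: field_simps)
  show ?thesis
    using sylvester_cases[of "hr_logK k" "\<phi> x" z]
  proof
    assume s: "sylvester (hr_logK k) (\<phi> x) z = 1"
    with assms have "hr_Q k \<epsilon> \<phi> x z = 2 * (exp \<epsilon> / (exp \<epsilon> + 1)) / hr_K k"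
      by (simp add: hr_Q_def hr_C_def)
    with s show ?thesis
      by (simp only: in_C of_int_1)
  next
    assume s: "sylvester (hr_logK k) (\<phi> x) z = -1"
    with assms have "hr_Q k \<epsilon> \<phi> x z = 2 * (1 / (exp \<epsilon> + 1)) / hr_K k"
      by (simp add: hr_Q_def hr_C_def)
    with s show ?thesis
      by (simp only: not_in_C of_int_minus of_int_1)
  qed
qed

lemma is_dist_unif: "0 < k \<Longrightarrow> is_dist k (unif k)"
  by (simp add: is_dist_def unif_def)

lemma sum_perturbed_product_div:
  fixes q0 d d' :: "'z \<Rightarrow> real"
  assumes "\<And>z. z \<in> Z \<Longrightarrow> q0 z \<noteq> 0" and "sum q0 Z = 1" and "sum d Z = 0" and "sum d' Z = 0"
  shows "(\<Sum>z\<in>Z. (q0 z + g * d z) * (q0 z + g * d' z) / q0 z) = 1 + g^2 * (\<Sum>z\<in>Z. d z * d' z / q0 z)"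
proof -
  have "(\<Sum>z\<in>Z. (q0 z + g * d z) * (q0 z + g * d' z) / q0 z)
      = (\<Sum>z\<in>Z. q0 z + g * d z + g * d' z + g^2 * (d z * d' z / q0 z))"
    using assms(1) by (intro sum.cong refl) (simp add: field_simps power2_eq_square)
  also have "\<dots> = 1 + g^2 * (\<Sum>z\<in>Z. d z * d' z / q0 z)"
    using assms(2-4) by (simp only: sum.distrib sum_distrib_left[symmetric])
  finally show ?thesis .
qed

locale hadamard_response =
  fixes k :: nat and \<epsilon> :: real and \<phi> :: "nat \<Rightarrow> nat"
  assumes two_le_k: "2 \<le> k" and \<epsilon>_nonneg: "0 \<le> \<epsilon>"
    and inj_\<phi>: "inj_on \<phi> {1..k}" and \<phi>_range: "\<phi> ` {1..k} \<subseteq> {2..hr_K k}"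
begin

abbreviation K :: nat where "K \<equiv> hr_K k"

text \<open>tanh (epsilon/2): a report lands in C_x with probability density (1 + bias)/K and elsewhere
  with (1 - bias)/K.\<close>
definition bias :: real where "bias = (exp \<epsilon> - 1) / (exp \<epsilon> + 1)"

definition row :: "nat \<Rightarrow> nat \<Rightarrow> real" where
  "row x z = real_of_int (sylvester (hr_logK k) (\<phi> x) z)"

definition pair_row :: "nat \<Rightarrow> nat \<Rightarrow> real" where
  "pair_row i z = row (2*i+1) z - row (2*i+2) z"

definition signal :: "(nat \<Rightarrow> real) \<Rightarrow> nat \<Rightarrow> real" where
  "signal \<theta> z = (\<Sum>i<k div 2. \<theta> i * pair_row i z)"

abbreviation unif_out :: "nat \<Rightarrow> real" where
  "unif_out \<equiv> hr_out k \<epsilon> \<phi> (unif k)"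

text \<open>The inner product of the report distributions of p_theta and p_theta' weighted by 1/q_0: the
  chi-square divergence of the mixture of the n-fold products is the average of its n-th powers,
  minus one.\<close>
definition overlap :: "real \<Rightarrow> (nat \<Rightarrow> real) \<Rightarrow> (nat \<Rightarrow> real) \<Rightarrow> real" where
  "overlap \<eta> \<theta> \<theta>' = (\<Sum>z\<in>{1..K}. hr_out k \<epsilon> \<phi> (paninski k \<eta> \<theta>) z * hr_out k \<epsilon> \<phi> (paninski k \<eta> \<theta>') z
                                / unif_out z)"

definition signal_coeff :: "(nat \<Rightarrow> real) \<Rightarrow> nat \<Rightarrow> real" where
  "signal_coeff \<theta> j = (\<Sum>z\<in>{1..K}. signal \<theta> z / unif_out z * pair_row j z)"

lemma K_pos: "real K > 0"
  by (simp add: hr_K_def)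

lemma one_minus_bias: "1 - bias = 2 / (exp \<epsilon> + 1)"
proof -
  have "exp \<epsilon> + 1 \<noteq> 0"
    using exp_gt_zero[of \<epsilon>] by linarith
  then show ?thesis
    unfolding bias_def by (simp add: field_simps)
qed

lemma \<phi>_mem: "x \<in> {1..k} \<Longrightarrow> \<phi> x \<in> {2..2 ^ hr_logK k}"
  using \<phi>_range unfolding hr_K_def by blast

lemma row_orthogonal:
  assumes "x \<in> {1..k}" "y \<in> {1..k}"
  shows "(\<Sum>z\<in>{1..K}. row x z * row y z) = (if x = y then K else 0)"
proof -
  have "\<phi> x \<in> {1..2 ^ hr_logK k}" "\<phi> y \<in> {1..2 ^ hr_logK k}"
    using \<phi>_mem[OF assms(1)] \<phi>_mem[OF assms(2)] by auto
  then show ?thesis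
    using sylvester_orthogonal inj_on_eq_iff[OF inj_\<phi> assms] by (simp add: row_def hr_K_def)
qed

lemma sum_row: "x \<in> {1..k} \<Longrightarrow> (\<Sum>z\<in>{1..K}. row x z) = 0"
  using \<phi>_mem sylvester_row_sum[of "\<phi> x" "hr_logK k"] by (simp add: row_def hr_K_def)

lemma hr_Q_eq_row: "z \<in> {1..K} \<Longrightarrow> hr_Q k \<epsilon> \<phi> x z = (1 + bias * row x z) / K"
  by (simp add: hr_Q_eq_sylvester bias_def row_def)

lemma sum_hr_out:
  assumes "is_dist k p"
  shows "(\<Sum>z\<in>{1..K}. hr_out k \<epsilon> \<phi> p z) = 1"
proof -
  have "(\<Sum>z\<in>{1..K}. hr_Q k \<epsilon> \<phi> x z) = 1" if "x \<in> {1..k}" for x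
    using K_pos sum_row[OF that]
    by (simp add: hr_Q_eq_row sum_divide_distrib[symmetric] sum.distrib sum_distrib_left[symmetric])
  then show ?thesis
    using assms unfolding hr_out_def is_dist_def
    by (subst sum.swap) (simp add: sum_distrib_left[symmetric])
qed

lemma pair_row_orthogonal:
  assumes "i < k div 2" "j < k div 2"
  shows "(\<Sum>z\<in>{1..K}. pair_row i z * pair_row j z) = (if i = j then 2 * real K else 0)"
proof -
  have mem: "2*i+1 \<in> {1..k}" "2*i+2 \<in> {1..k}" "2*j+1 \<in> {1..k}" "2*j+2 \<in> {1..k}"
    using assms by auto
  have "(\<Sum>z\<in>{1..K}. pair_row i z * pair_row j z)
      = (\<Sum>z\<in>{1..K}. row (2*i+1) z * row (2*j+1) z) - (\<Sum>z\<in>{1..K}. row (2*i+1) z * row (2*j+2) z)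
      - (\<Sum>z\<in>{1..K}. row (2*i+2) z * row (2*j+1) z) + (\<Sum>z\<in>{1..K}. row (2*i+2) z * row (2*j+2) z)"
    unfolding pair_row_def by (simp add: sum.distrib sum_subtractf algebra_simps)
  also have "\<dots> = (if i = j then 2 * real K else 0)"
    by (simp only: row_orthogonal[OF mem(1,3)] row_orthogonal[OF mem(1,4)]
        row_orthogonal[OF mem(2,3)] row_orthogonal[OF mem(2,4)]) auto
  finally show ?thesis .
qed

lemma sum_signal: "(\<Sum>z\<in>{1..K}. signal \<theta> z) = 0"
proof -
  have "(\<Sum>z\<in>{1..K}. pair_row i z) = 0" if "i < k div 2" for i
    using that sum_row[of "2*i+1"] sum_row[of "2*i+2"] by (simp add: pair_row_def sum_subtractf)
  then show ?thesis
    unfolding signal_def by (subst sum.swap) (simp add: sum_distrib_left[symmetric])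
qed

lemma sum_square_signal:
  assumes "\<theta> \<in> sign_vectors (k div 2)"
  shows "(\<Sum>z\<in>{1..K}. (signal \<theta> z)^2) = 2 * real K * real (k div 2)"
proof -
  have "(\<Sum>z\<in>{1..K}. (signal \<theta> z)^2) = 2 * real K * (\<Sum>j<k div 2. (\<theta> j)^2)"
    unfolding signal_def by (rule sum_square_orthogonal_expansion) (rule pair_row_orthogonal, auto)
  also have "(\<Sum>j<k div 2. (\<theta> j)^2) = (\<Sum>j<k div 2. 1)"
    using assms by (intro sum.cong refl) (force simp: PiE_iff)
  finally show ?thesis by simp
qed

lemma hr_out_paninski:
  assumes "z \<in> {1..K}"
  shows "hr_out k \<epsilon> \<phi> (paninski k \<eta> \<theta>) z
    = hr_out k \<epsilon> \<phi> (unif k) z + bias * \<eta> / (k * K) * signal \<theta> z"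
proof -
  have "(\<Sum>x\<in>{1..k}. pair_sign (k div 2) \<theta> x * hr_Q k \<epsilon> \<phi> x z)
      = (\<Sum>i<k div 2. \<theta> i * (hr_Q k \<epsilon> \<phi> (2*i+1) z - hr_Q k \<epsilon> \<phi> (2*i+2) z))"
    by (rule sum_pair_sign_mult) simp
  also have "\<dots> = (\<Sum>i<k div 2. bias / K * (\<theta> i * pair_row i z))"
    using assms
    by (intro sum.cong refl) (simp add: hr_Q_eq_row pair_row_def diff_divide_distrib[symmetric] algebra_simps)
  also have "\<dots> = bias / K * signal \<theta> z"
    by (simp add: signal_def sum_distrib_left)
  finally have signal_eq: "(\<Sum>x\<in>{1..k}. pair_sign (k div 2) \<theta> x * hr_Q k \<epsilon> \<phi> x z)
      = bias / K * signal \<theta> z" .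
  have "hr_out k \<epsilon> \<phi> (paninski k \<eta> \<theta>) z
      = (\<Sum>x\<in>{1..k}. 1 / k * hr_Q k \<epsilon> \<phi> x z + \<eta> / k * (pair_sign (k div 2) \<theta> x * hr_Q k \<epsilon> \<phi> x z))"
    unfolding hr_out_def paninski_def by (intro sum.cong refl) (simp add: field_simps)
  also have "\<dots> = hr_out k \<epsilon> \<phi> (unif k) z
      + \<eta> / k * (\<Sum>x\<in>{1..k}. pair_sign (k div 2) \<theta> x * hr_Q k \<epsilon> \<phi> x z)"
    by (simp only: sum.distrib sum_distrib_left hr_out_def unif_def)
  also have "\<dots> = hr_out k \<epsilon> \<phi> (unif k) z + \<eta> / k * (bias / K * signal \<theta> z)"
    by (simp only: signal_eq)
  finally show ?thesis
    by simp
qed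

lemma unif_out_ge: "(1 - bias) / K \<le> unif_out z"
proof -
  have "2 / (K * (exp \<epsilon> + 1)) \<le> unif_out z"
    by (rule hr_out_ge[OF \<epsilon>_nonneg is_dist_unif]) (use two_le_k in simp)
  then show ?thesis
    by (simp add: one_minus_bias mult.commute)
qed

lemma unif_out_pos: "0 < unif_out z"
proof -
  have "0 < (1 - bias) / K"
    using K_pos by (simp add: one_minus_bias add_pos_pos)
  then show ?thesis
    using unif_out_ge[of z] by linarith
qed

lemma overlap_eq:
  "overlap \<eta> \<theta> \<theta>' = 1 + (bias * \<eta> / (k * K))^2 * (\<Sum>j<k div 2. \<theta>' j * signal_coeff \<theta> j)"
proof -
  let ?g = "bias * \<eta> / (k * K)"
  have "overlap \<eta> \<theta> \<theta>'
      = (\<Sum>z\<in>{1..K}. (unif_out z + ?g * signal \<theta> z) * (unif_out z + ?g * signal \<theta>' z) / unif_out z)"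
    unfolding overlap_def by (intro sum.cong refl) (simp add: hr_out_paninski)
  also have "\<dots> = 1 + ?g^2 * (\<Sum>z\<in>{1..K}. signal \<theta> z * signal \<theta>' z / unif_out z)"
  proof (rule sum_perturbed_product_div)
    show "unif_out z \<noteq> 0" for z
      using unif_out_pos[of z] by simp
    show "sum unif_out {1..K} = 1"
      using two_le_k by (intro sum_hr_out is_dist_unif) simp
  qed (rule sum_signal)+
  also have "(\<Sum>z\<in>{1..K}. signal \<theta> z * signal \<theta>' z / unif_out z)
      = (\<Sum>z\<in>{1..K}. \<Sum>j<k div 2. \<theta>' j * (signal \<theta> z / unif_out z * pair_row j z))"
    unfolding signal_def[of \<theta>'] by (simp add: sum_distrib_left sum_divide_distrib mult_ac)
  also have "\<dots> = (\<Sum>j<k div 2. \<theta>' j * signal_coeff \<theta> j)"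
    unfolding signal_coeff_def by (subst sum.swap) (simp only: sum_distrib_left)
  finally show ?thesis .
qed

lemma sum_square_signal_coeff_le:
  assumes "\<theta> \<in> sign_vectors (k div 2)"
  shows "(\<Sum>j<k div 2. (signal_coeff \<theta> j)^2) \<le> 4 * real K^4 * real (k div 2) / (1 - bias)^2"
proof -
  have "0 < 1 - bias"
    by (simp add: one_minus_bias add_pos_pos)
  have "(\<Sum>j<k div 2. (signal_coeff \<theta> j)^2) \<le> 2 * real K * (\<Sum>z\<in>{1..K}. (signal \<theta> z / unif_out z)^2)"
    unfolding signal_coeff_def using K_pos by (intro Bessel_inequality pair_row_orthogonal) auto
  also have "(\<Sum>z\<in>{1..K}. (signal \<theta> z / unif_out z)^2) \<le> (\<Sum>z\<in>{1..K}. (signal \<theta> z)^2 * (K / (1 - bias))^2)"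
  proof (intro sum_mono)
    fix z
    have "1 / unif_out z \<le> K / (1 - bias)"
      using unif_out_ge[of z] unif_out_pos[of z] K_pos \<open>0 < 1 - bias\<close> by (simp add: field_simps)
    then have "(signal \<theta> z)^2 * (1 / unif_out z)^2 \<le> (signal \<theta> z)^2 * (K / (1 - bias))^2"
      using unif_out_pos[of z] by (intro mult_left_mono power_mono) auto
    then show "(signal \<theta> z / unif_out z)^2 \<le> (signal \<theta> z)^2 * (K / (1 - bias))^2"
      by (simp add: power_divide)
  qed
  also have "\<dots> = 2 * real K * real (k div 2) * (K / (1 - bias))^2"
    by (simp only: sum_distrib_right[symmetric] sum_square_signal[OF assms])
  finally show ?thesis
    using K_pos by (simp add: power_divide power2_eq_square power4_eq_xxxx field_simps)
qed

lemma hr_out_paninski_nonneg: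
  assumes "0 \<le> \<eta>" "\<eta> \<le> 1" and "\<theta> \<in> sign_vectors (k div 2)"
  shows "0 \<le> hr_out k \<epsilon> \<phi> (paninski k \<eta> \<theta>) z"
proof -
  have "is_dist k (paninski k \<eta> \<theta>)"
    by (intro is_dist_paninski) (use assms two_le_k in \<open>force simp: PiE_iff\<close>)+
  moreover have "0 \<le> 2 / (hr_K k * (exp \<epsilon> + 1))"
    by (simp add: add_pos_pos less_imp_le)
  ultimately show ?thesis
    using hr_out_ge[OF \<epsilon>_nonneg] order_trans by blast
qed

lemma overlap_power_le:
  assumes "0 \<le> \<eta>" "\<eta> \<le> 1" and "\<theta> \<in> sign_vectors (k div 2)" "\<theta>' \<in> sign_vectors (k div 2)"
  shows "overlap \<eta> \<theta> \<theta>' ^ n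
         \<le> exp (\<Sum>j<k div 2. \<theta>' j * (n * (bias * \<eta> / (k * K))^2 * signal_coeff \<theta> j))"
proof -
  define X where "X = (bias * \<eta> / (k * K))^2 * (\<Sum>j<k div 2. \<theta>' j * signal_coeff \<theta> j)"
  have "0 \<le> overlap \<eta> \<theta> \<theta>'"
    unfolding overlap_def using assms unif_out_pos
    by (intro sum_nonneg divide_nonneg_pos mult_nonneg_nonneg hr_out_paninski_nonneg) auto
  moreover have "overlap \<eta> \<theta> \<theta>' = 1 + X"
    unfolding X_def by (rule overlap_eq)
  ultimately have "overlap \<eta> \<theta> \<theta>' ^ n \<le> (exp X) ^ n"
    by (intro power_mono) (use exp_ge_add_one_self[of X] in auto)
  also have "\<dots> = exp (\<Sum>j<k div 2. \<theta>' j * (n * (bias * \<eta> / (k * K))^2 * signal_coeff \<theta> j))"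
    by (simp add: X_def exp_of_nat_mult[symmetric] sum_distrib_left mult_ac)
  finally show ?thesis .
qed

lemma sum_overlap_power_le:
  assumes "0 \<le> \<eta>" "\<eta> \<le> 1" and \<theta>: "\<theta> \<in> sign_vectors (k div 2)"
  shows "(\<Sum>\<theta>'\<in>sign_vectors (k div 2). overlap \<eta> \<theta> \<theta>' ^ n)
         \<le> 2 ^ (k div 2) * exp (2 * real n^2 * (bias * \<eta> / k)^4 * real (k div 2) / (1 - bias)^2)"
proof -
  define a where "a j = n * (bias * \<eta> / (k * K))^2 * signal_coeff \<theta> j" for j
  have "(\<Sum>j<k div 2. (a j)^2) / 2 = (n * (bias * \<eta> / (k * K))^2)^2 * (\<Sum>j<k div 2. (signal_coeff \<theta> j)^2) / 2"
    by (simp add: a_def power_mult_distrib sum_distrib_left)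
  also have "\<dots> \<le> (n * (bias * \<eta> / (k * K))^2)^2 * (4 * real K^4 * real (k div 2) / (1 - bias)^2) / 2"
    by (intro divide_right_mono mult_left_mono sum_square_signal_coeff_le[OF \<theta>]) auto
  also have "\<dots> = 2 * real n^2 * (bias * \<eta> / k)^4 * real (k div 2) / (1 - bias)^2"
    using K_pos by (simp add: power_mult_distrib power_divide field_simps)
  finally have exponent_le: "(\<Sum>j<k div 2. (a j)^2) / 2
      \<le> 2 * real n^2 * (bias * \<eta> / k)^4 * real (k div 2) / (1 - bias)^2" .
  have "(\<Sum>\<theta>'\<in>sign_vectors (k div 2). overlap \<eta> \<theta> \<theta>' ^ n)
      \<le> (\<Sum>\<theta>'\<in>sign_vectors (k div 2). exp (\<Sum>j<k div 2. \<theta>' j * a j))"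
    unfolding a_def using assms by (intro sum_mono overlap_power_le)
  also have "\<dots> \<le> 2 ^ (k div 2) * exp ((\<Sum>j<k div 2. (a j)^2) / 2)"
    using sum_exp_Rademacher_le[of "{..<k div 2}"] by simp
  also have "\<dots> \<le> 2 ^ (k div 2) * exp (2 * real n^2 * (bias * \<eta> / k)^4 * real (k div 2) / (1 - bias)^2)"
    using exponent_le by simp
  finally show ?thesis .
qed

lemma bias_nonneg: "0 \<le> bias"
  using \<epsilon>_nonneg by (simp add: bias_def add_pos_pos)

lemma bias_le:
  assumes "\<epsilon> \<le> 1"
  shows "bias \<le> \<epsilon>"
proof -
  have "exp \<epsilon> \<le> 1 + \<epsilon> + \<epsilon>^2"
    using exp_bound[of \<epsilon>] \<epsilon>_nonneg assms by simp
  also have "\<dots> \<le> 1 + 2 * \<epsilon>"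
    using \<epsilon>_nonneg assms by (simp add: power2_eq_square mult_left_le)
  moreover have "\<epsilon> * 1 \<le> \<epsilon> * exp \<epsilon>"
    using \<epsilon>_nonneg by (intro mult_left_mono) auto
  ultimately have "exp \<epsilon> - 1 \<le> \<epsilon> * (exp \<epsilon> + 1)"
    by (simp add: distrib_left)
  then show ?thesis
    unfolding bias_def by (simp add: divide_le_eq add_pos_pos)
qed

lemma one_minus_bias_ge:
  assumes "\<epsilon> \<le> 1"
  shows "1/2 \<le> 1 - bias"
proof -
  have "exp \<epsilon> \<le> 3"
    using exp_le assms by (meson exp_le_cancel_iff order_trans)
  then show ?thesis
    unfolding one_minus_bias by (simp add: field_simps add_pos_pos)
qed

lemma sum_overlap_power_ge_of_test:
  assumes "0 < \<gamma>" "\<gamma> \<le> 1/4"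
    and \<delta>: "\<forall>zs. 0 \<le> \<delta> zs \<and> \<delta> zs \<le> 1"
    and accept: "reject_prob k \<epsilon> \<phi> n \<delta> (unif k) \<le> 1/3"
    and reject: "\<forall>p. is_dist k p \<and> dtv k p (unif k) > \<gamma> \<longrightarrow> reject_prob k \<epsilon> \<phi> n \<delta> p \<ge> 2/3"
  shows "10/9 * card (sign_vectors (k div 2)) ^ 2
    \<le> (\<Sum>\<theta>\<in>sign_vectors (k div 2). \<Sum>\<theta>'\<in>sign_vectors (k div 2). overlap (4 * \<gamma>) \<theta> \<theta>' ^ n)"
  unfolding overlap_def
proof (rule mixture_test_lower_bound)
  have dist: "is_dist k (paninski k (4 * \<gamma>) \<theta>)" if "\<theta> \<in> sign_vectors (k div 2)" for \<theta>
    by (intro is_dist_paninski) (use assms(1,2) two_le_k that in \<open>force simp: PiE_iff\<close>)+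
  show "(\<Sum>z\<in>{1..K}. hr_out k \<epsilon> \<phi> (paninski k (4 * \<gamma>) \<theta>) z) = 1"
    if "\<theta> \<in> sign_vectors (k div 2)" for \<theta>
    by (rule sum_hr_out[OF dist[OF that]])
  show "sum unif_out {1..K} = 1"
    using two_le_k by (intro sum_hr_out is_dist_unif) simp
  show "(\<Sum>zs\<in>PiE {..<n} (\<lambda>_. {1..K}). (\<Prod>i<n. hr_out k \<epsilon> \<phi> (paninski k (4 * \<gamma>) \<theta>) (zs i)) * \<delta> zs)
        \<ge> 2/3" if "\<theta> \<in> sign_vectors (k div 2)" for \<theta>
    using reject dist[OF that] dtv_paninski_gt[OF two_le_k assms(1) that]
    by (simp add: reject_prob_def)
qed (use \<delta> accept unif_out_pos in \<open>auto simp: reject_prob_def PiE_eq_empty_iff finite_PiE\<close>)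

lemma chi_square_exponent_le:
  assumes "0 \<le> \<gamma>" "\<epsilon> \<le> 1"
  shows "2 * real n^2 * (bias * (4 * \<gamma>) / k)^4 * real (k div 2) / (1 - bias)^2
         \<le> 1024 * (real n * \<gamma>^2 * \<epsilon>^2)^2 / real k ^ 3"
proof -
  have "0 < real k"
    using two_le_k by simp
  have "bias^4 \<le> \<epsilon>^4"
    using bias_nonneg bias_le[OF assms(2)] by (intro power_mono)
  moreover have "1 / (1 - bias)^2 \<le> 4"
  proof -
    have "1 / (1 - bias)^2 \<le> 1 / (1/2)^2"
      using one_minus_bias_ge[OF assms(2)] by (intro divide_left_mono power_mono mult_pos_pos) auto
    then show ?thesis
      by (simp add: power_divide)
  qed
  moreover have "2 * real (k div 2) \<le> real k"
  proof -
    have "2 * (k div 2) \<le> k"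
      by simp
    then show ?thesis
      by (metis of_nat_le_iff of_nat_mult of_nat_numeral)
  qed
  ultimately have "bias^4 * (2 * real (k div 2)) * (1 / (1 - bias)^2) \<le> \<epsilon>^4 * k * 4"
    using bias_nonneg by (intro mult_mono) auto
  have "2 * real n^2 * (bias * (4 * \<gamma>) / k)^4 * real (k div 2) / (1 - bias)^2
      = 256 * (real n * \<gamma>^2)^2 / k^4 * (bias^4 * (2 * real (k div 2)) * (1 / (1 - bias)^2))"
    by (simp add: power_mult_distrib power_divide power2_eq_square power4_eq_xxxx)
  also have "\<dots> \<le> 256 * (real n * \<gamma>^2)^2 / k^4 * (\<epsilon>^4 * k * 4)"
    using \<open>bias^4 * _ * _ \<le> _\<close> by (intro mult_left_mono) auto
  also have "\<dots> = 1024 * (real n * \<gamma>^2 * \<epsilon>^2)^2 / real k ^ 3"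
    using \<open>0 < real k\<close> by (simp add: field_simps power2_eq_square power3_eq_cube power4_eq_xxxx)
  finally show ?thesis .
qed

lemma identity_testing_lower_bound:
  assumes "0 < \<gamma>" "\<gamma> \<le> 1/4" "0 < \<epsilon>" "\<epsilon> \<le> 1"
    and "\<forall>zs. 0 \<le> \<delta> zs \<and> \<delta> zs \<le> 1"
    and "reject_prob k \<epsilon> \<phi> n \<delta> (unif k) \<le> 1/3"
    and "\<forall>p. is_dist k p \<and> dtv k p (unif k) > \<gamma> \<longrightarrow> reject_prob k \<epsilon> \<phi> n \<delta> p \<ge> 2/3"
  shows "1/144 * real k powr (3/2) / (\<gamma>^2 * \<epsilon>^2) \<le> real n"
proof -
  define Y where "Y = 2 * real n^2 * (bias * (4 * \<gamma>) / k)^4 * real (k div 2) / (1 - bias)^2"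
  have card_signs: "card (sign_vectors (k div 2)) = 2 ^ (k div 2)"
    by (simp add: card_PiE numeral_2_eq_2)
  have "10/9 * real (card (sign_vectors (k div 2))) ^ 2
      \<le> (\<Sum>\<theta>\<in>sign_vectors (k div 2). \<Sum>\<theta>'\<in>sign_vectors (k div 2). overlap (4 * \<gamma>) \<theta> \<theta>' ^ n)"
    using sum_overlap_power_ge_of_test[OF assms(1,2,5-7)] by simp
  also have "\<dots> \<le> (\<Sum>\<theta>\<in>sign_vectors (k div 2). 2 ^ (k div 2) * exp Y)"
    unfolding Y_def using assms(1,2) by (intro sum_mono sum_overlap_power_le) auto
  also have "\<dots> = real (card (sign_vectors (k div 2))) ^ 2 * exp Y"
    by (simp add: card_signs power2_eq_square)
  finally have "10/9 \<le> exp Y"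
    by (simp add: card_signs)
  then have "exp (-Y) \<le> 9/10"
    by (simp add: exp_minus field_simps)
  then have "1/10 \<le> Y"
    using exp_ge_add_one_self[of "-Y"] by linarith
  also have "Y \<le> 1024 * (real n * \<gamma>^2 * \<epsilon>^2)^2 / real k ^ 3"
    unfolding Y_def using assms(1,4) by (intro chi_square_exponent_le) auto
  finally have "real k ^ 3 \<le> 10240 * (real n * \<gamma>^2 * \<epsilon>^2)^2"
    using two_le_k by (simp add: field_simps)
  also have "\<dots> \<le> (144 * (real n * \<gamma>^2 * \<epsilon>^2))^2"
    by (simp add: power_mult_distrib)
  finally have "real k powr (3/2) \<le> 144 * (real n * \<gamma>^2 * \<epsilon>^2)"
    by (intro powr_three_halves_le) auto
  then show ?thesis
    using assms(1,3) by (simp add: pos_divide_le_eq mult.assoc)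
qed

end

theorem theorem5p3:
  shows "\<exists>c>0. \<forall>(k::nat) (\<gamma>::real) (\<epsilon>::real) (n::nat) (\<phi>::nat \<Rightarrow> nat) (\<delta>::(nat \<Rightarrow> nat) \<Rightarrow> real).
     k \<ge> 2 \<longrightarrow> 0 < \<gamma> \<longrightarrow> \<gamma> \<le> 1/4 \<longrightarrow> 0 < \<epsilon> \<longrightarrow> \<epsilon> \<le> 1 \<longrightarrow>
     inj_on \<phi> {1..k} \<longrightarrow> \<phi> ` {1..k} \<subseteq> {2..hr_K k} \<longrightarrow>
     (\<forall>zs. 0 \<le> \<delta> zs \<and> \<delta> zs \<le> 1) \<longrightarrow>
     reject_prob k \<epsilon> \<phi> n \<delta> (unif k) \<le> 1/3 \<longrightarrow>
     (\<forall>p. is_dist k p \<and> dtv k p (unif k) > \<gamma> \<longrightarrow> reject_prob k \<epsilon> \<phi> n \<delta> p \<ge> 2/3) \<longrightarrow>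
     real n \<ge> c * real k powr (3/2) / (\<gamma>^2 * \<epsilon>^2)"
proof (intro exI[of _ "1/144"] conjI allI impI)
  fix k n :: nat and \<gamma> \<epsilon> :: real and \<phi> :: "nat \<Rightarrow> nat" and \<delta> :: "(nat \<Rightarrow> nat) \<Rightarrow> real"
  assume "2 \<le> k" "0 < \<gamma>" "\<gamma> \<le> 1/4" "0 < \<epsilon>" "\<epsilon> \<le> 1"
    and "inj_on \<phi> {1..k}" "\<phi> ` {1..k} \<subseteq> {2..hr_K k}"
    and "\<forall>zs. 0 \<le> \<delta> zs \<and> \<delta> zs \<le> 1"
    and "reject_prob k \<epsilon> \<phi> n \<delta> (unif k) \<le> 1/3"
    and "\<forall>p. is_dist k p \<and> dtv k p (unif k) > \<gamma> \<longrightarrow> reject_prob k \<epsilon> \<phi> n \<delta> p \<ge> 2/3"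
  note assms = this
  interpret hadamard_response k \<epsilon> \<phi>
    using assms(1,4,6,7) by unfold_locales simp_all
  show "1/144 * real k powr (3/2) / (\<gamma>^2 * \<epsilon>^2) \<le> real n"
    using assms(2-5,8-10) by (rule identity_testing_lower_bound)
qed simp

end
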